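(* Let $q\in\mathbb N$ with $0<b\le q(r-1)$. Then: (1) $r\ge e-q-1$. In particular: (a) if $r=e-1-q$, then $b=q(r-1)$, $q\le e-3$, and $e-r=k$, $\sum_{i\in B}r_i=e-1$, $r_i=r$ for every $i\in A$ (equivalently $b=(e-r-1)(r-1)$, equivalently $b=(k-1)(r-1)$); (b) if $r\ge e-q$, then $e-r\le k\le q$. (2) If moreover $(q-1)(r-1)<b\le q(r-1)$, then (c) $k-1\le q\le n-1$, and (d) $(q-k-1)(r-1)<\sum_{i\in A}(r-r_i)\le(q-k)(r-1)+e-1-k$.
   Context: Let $(R,\mathfrak m)$ be a one-dimensional local Noetherian domain with quotient field $K$, not regular, analytically irreducible (the integral closure $\overline R$ of $R$ in $K$ is a DVR and a finite $R$-module) and residually rational. Let $v$ be the valuation of $\overline R$ normalized so a uniformizer $t$ has value 1, $v(R)=\{v(a):a\in R\setminus\{0\}\}$, $\mathfrak C=(R:_K\overline R)=t^c\overline R$ with $c$ the least element of $v(R)$ with $c+\mathbb N\subseteq v(R)$, $\delta=\ell_R(\overline R/R)$, $r=\ell_R((R:_K\mathfrak m)/R)$, $b=(c-\delta)r-\delta$, $e$ the least positive element of $v(R)$, $n=c-\delta$. Write $v(R)=\{s_0=0<s_1<\cdots\}$ ($s_n=c$), $R_i=\{a\in R:v(a)\ge s_i\}$, $r_i=\ell_R((R:_KR_i)/(R:_KR_{i-1}))$. Let $i_0\in[1,n]$ with $s_{i_0-1}=\min\{y\in v(R):y\ge c-e\}$, $B=\{i_0,\dots,n\}$, $A=\{1,\dots,n\}\setminus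 B$. Let $x\in\mathfrak m$ with $v(x)=e$ and $k=\ell_R(R/(\mathfrak C+xR))$. *)

theory Defs
  imports Main "HOL-Library.Infinite_Set"
begin

text \<open>Everything lives inside a field K, modelled as a type 'a of class field.
 R is a subring of K; fractional ideals / R-submodules of K are subsets of K.\<close>

definition subring :: "'a::field set \<Rightarrow> bool" where
  "subring R \<longleftrightarrow> 0 \<in> R \<and> 1 \<in> R \<and> (\<forall>x\<in>R. \<forall>y\<in>R. x + y \<in> R \<and> x * y \<in> R \<and> - x \<in> R)"

definition submodule :: "'a::field set \<Rightarrow> 'a set \<Rightarrow> bool" where
  "submodule R M \<longleftrightarrow> 0 \<in> M \<and> (\<forall>x\<in>M. \<forall>y\<in>M. x + y \<in> M) \<and> (\<forall>a\<in>R. \<forall>x\<in>M. a * x \<in> M)"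

definition ideal_of :: "'a::field set \<Rightarrow> 'a set \<Rightarrow> bool" where
  "ideal_of R I \<longleftrightarrow> I \<subseteq> R \<and> submodule R I"

definition rspan :: "'a::field set \<Rightarrow> 'a set \<Rightarrow> 'a set" where
  "rspan R G = {(\<Sum>g\<in>G. f g * g) | f. \<forall>g\<in>G. f g \<in> R}"

definition noetherian :: "'a::field set \<Rightarrow> bool" where
  "noetherian R \<longleftrightarrow> (\<forall>I. ideal_of R I \<longrightarrow> (\<exists>G. finite G \<and> G \<subseteq> I \<and> I = rspan R G))"

definition prime_ideal_of :: "'a::field set \<Rightarrow> 'a set \<Rightarrow> bool" where
  "prime_ideal_of R P \<longleftrightarrow> ideal_of R P \<and> P \<noteq> R \<and> (\<forall>x\<in>R. \<forall>y\<in>R. x * y \<in> P \<longrightarrow> x \<in> P \<or> y \<in> P)"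

text \<open>The non-units of R; for a local ring this is the maximal ideal m.\<close>
definition nonunits :: "'a::field set \<Rightarrow> 'a set" where
  "nonunits R = {a \<in> R. \<forall>b\<in>R. a * b \<noteq> 1}"

definition local_ring :: "'a::field set \<Rightarrow> bool" where
  "local_ring R \<longleftrightarrow> ideal_of R (nonunits R)"

text \<open>Krull dimension one (for a local domain): m is nonzero and every nonzero prime is m.\<close>
definition dim_one :: "'a::field set \<Rightarrow> bool" where
  "dim_one R \<longleftrightarrow> nonunits R \<noteq> {0} \<and> (\<forall>P. prime_ideal_of R P \<and> P \<noteq> {0} \<longrightarrow> P = nonunits R)"

text \<open>A one-dimensional local Noetherian ring is regular iff its maximal ideal is principal.\<close>
definition regular_dim1 :: "'a::field set \<Rightarrow> bool" where
  "regular_dim1 R \<longleftrightarrow> (\<exists>t\<in>R. nonunits R = {t * a | a. a \<in> R})"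

text \<open>K (= UNIV) is the quotient field of R.\<close>
definition quotient_field_of :: "'a::field set \<Rightarrow> bool" where
  "quotient_field_of R \<longleftrightarrow> (\<forall>x. \<exists>a\<in>R. \<exists>b\<in>R. b \<noteq> 0 \<and> x = a / b)"

definition integral_closure :: "'a::field set \<Rightarrow> 'a set" where
  "integral_closure R = {x. \<exists>n f. (\<forall>i<n. f i \<in> R) \<and> x ^ n + (\<Sum>i<n. f i * x ^ i) = 0}"

text \<open>A discrete valuation of K, normalized so that some t has value 1 (values on nonzero elements).\<close>
definition discrete_valuation :: "('a::field \<Rightarrow> int) \<Rightarrow> bool" where
  "discrete_valuation v \<longleftrightarrow>
     (\<forall>x y. x \<noteq> 0 \<and> y \<noteq> 0 \<longrightarrow> v (x * y) = v x + v y) \<and>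
     (\<forall>x y. x \<noteq> 0 \<and> y \<noteq> 0 \<and> x + y \<noteq> 0 \<longrightarrow> v (x + y) \<ge> min (v x) (v y)) \<and>
     (\<exists>t. t \<noteq> 0 \<and> v t = 1)"

definition val_ring :: "('a::field \<Rightarrow> int) \<Rightarrow> 'a set" where
  "val_ring v = {x. x = 0 \<or> v x \<ge> 0}"

definition residually_rational :: "'a::field set \<Rightarrow> ('a \<Rightarrow> int) \<Rightarrow> bool" where
  "residually_rational R v \<longleftrightarrow> (\<forall>y\<in>val_ring v. \<exists>a\<in>R. y = a \<or> v (y - a) > 0)"

definition colon :: "'a::field set \<Rightarrow> 'a set \<Rightarrow> 'a set" where
  "colon A B = {x. \<forall>b\<in>B. x * b \<in> A}"

definition rlength :: "'a::field set \<Rightarrow> 'a set \<Rightarrow> 'a set \<Rightarrow> nat" where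
  "rlength R M N = (GREATEST n. \<exists>f. f 0 = N \<and> f n = M \<and> (\<forall>i\<le>n. submodule R (f i))
                        \<and> (\<forall>i<n. f i \<subset> f (Suc i)))"

definition value_set :: "'a::field set \<Rightarrow> ('a \<Rightarrow> int) \<Rightarrow> nat set" where
  "value_set R v = {nat (v a) | a. a \<in> R \<and> a \<noteq> 0}"

definition cond_exp :: "'a::field set \<Rightarrow> ('a \<Rightarrow> int) \<Rightarrow> nat" where
  "cond_exp R v = (LEAST c. c \<in> value_set R v \<and> (\<forall>j. c + j \<in> value_set R v))"

definition mult_e :: "'a::field set \<Rightarrow> ('a \<Rightarrow> int) \<Rightarrow> nat" where
  "mult_e R v = (LEAST y. y \<in> value_set R v \<and> 0 < y)"

text \<open>s_i: the i-th element (from s_0 = 0) of v(R).\<close>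
definition sval :: "'a::field set \<Rightarrow> ('a \<Rightarrow> int) \<Rightarrow> nat \<Rightarrow> nat" where
  "sval R v i = enumerate (value_set R v) i"

definition Rfilt :: "'a::field set \<Rightarrow> ('a \<Rightarrow> int) \<Rightarrow> nat \<Rightarrow> 'a set" where
  "Rfilt R v i = {a \<in> R. a = 0 \<or> v a \<ge> int (sval R v i)}"

definition rfilt :: "'a::field set \<Rightarrow> ('a \<Rightarrow> int) \<Rightarrow> nat \<Rightarrow> nat" where
  "rfilt R v i = rlength R (colon R (Rfilt R v i)) (colon R (Rfilt R v (i - 1)))"

end

theory Submission
  imports Defs "HOL-Library.Set_Algebras"
begin

text \<open>All lengths in the statement are lengths l(M/N) of R-modules N \<subseteq> M lying between the
  conductor and the integral closure of R, and for these l(M/N) = |v(M) - v(N)|: residual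
  rationality lets one cancel leading terms, so such modules coincide once their value sets do,
  and a composition series is obtained by adjoining the missing values one at a time. Hence \<delta>, k, r and the r_i become counting
  problems in the semigroup v(R): the r_i sum to \<delta> = c - n, k = n - i0 + 1 counts the Apery set
  of e below c, the r_i with i in B sum to at most e - 1, and e \<le> r + k. Moreover
  1 \<le> r_i \<le> r, the upper bound by multiplying a composition series of (R:R_i)/(R:R_(i-1))
  with an element of value s_(i-1). Since b is the sum of the r - r_i, what remains is integer
  arithmetic.\<close>

lemma submodule_zero: "submodule R M \<Longrightarrow> 0 \<in> M"
  and submodule_add: "submodule R M \<Longrightarrow> x \<in> M \<Longrightarrow> y \<in> M \<Longrightarrow> x + y \<in> M"
  and submodule_smult: "submodule R M \<Longrightarrow> a \<in> R \<Longrightarrow> x \<in> M \<Longrightarrow> a * x \<in> M"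
  unfolding submodule_def by blast+

lemma submodule_Int: "submodule R A \<Longrightarrow> submodule R B \<Longrightarrow> submodule R (A \<inter> B)"
  unfolding submodule_def by blast

lemma submodule_set_plus:
  assumes "submodule R A" "submodule R B"
  shows "submodule R (A + B)"
  unfolding submodule_def
proof (intro conjI ballI)
  show "0 \<in> A + B"
    using set_plus_intro[OF submodule_zero submodule_zero] assms by fastforce
next
  fix x y assume "x \<in> A + B" "y \<in> A + B"
  then obtain p q p' q' where "x = p + q" "y = p' + q'" "p \<in> A" "q \<in> B" "p' \<in> A" "q' \<in> B"
    by (auto elim!: set_plus_elim)
  moreover have "p + q + (p' + q') = (p + p') + (q + q')" by (simp add: algebra_simps)
  ultimately show "x + y \<in> A + B" using submodule_add assms by (metis set_plus_intro)
next
  fix a x assume "a \<in> R" "x \<in> A + B"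
  moreover from \<open>x \<in> A + B\<close> obtain p q where "x = p + q" "p \<in> A" "q \<in> B"
    by (auto elim!: set_plus_elim)
  ultimately show "a * x \<in> A + B"
    using submodule_smult assms by (metis distrib_left set_plus_intro)
qed

lemma submodule_elt_set_times:
  assumes X: "submodule R X"
  shows "submodule R (y *o X)"
  unfolding submodule_def
proof (intro conjI ballI)
  show "0 \<in> y *o X" using set_times_intro2[OF submodule_zero[OF X], of y] by simp
next
  fix p q assume "p \<in> y *o X" "q \<in> y *o X"
  then obtain z w where "p = y * z" "q = y * w" "z \<in> X" "w \<in> X" unfolding elt_set_times_def by blast
  then show "p + q \<in> y *o X"
    using set_times_intro2[OF submodule_add[OF X], of z w y] by (simp add: distrib_left)
next
  fix a p assume "a \<in> R" "p \<in> y *o X"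
  then obtain z where "p = y * z" "z \<in> X" unfolding elt_set_times_def by blast
  then show "a * p \<in> y *o X"
    using set_times_intro2[OF submodule_smult[OF X \<open>a \<in> R\<close>], of z y] by (simp add: mult.left_commute)
qed

lemma submodule_colon: "subring R \<Longrightarrow> submodule R (colon R X)"
  unfolding submodule_def subring_def colon_def by (simp add: distrib_right mult.assoc)

lemma colon_anti_mono: "X \<subseteq> Y \<Longrightarrow> colon R Y \<subseteq> colon R X"
  unfolding colon_def by blast

lemma subset_colon: "subring R \<Longrightarrow> X \<subseteq> R \<Longrightarrow> R \<subseteq> colon R X"
  unfolding colon_def subring_def by blast

lemma colon_self: "subring R \<Longrightarrow> colon R R = R"
  using subset_colon[of R R] unfolding colon_def subring_def by force

lemma nonunits_subset: "nonunits R \<subseteq> R"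
  unfolding nonunits_def by blast

definition submodule_chain :: "'a::field set \<Rightarrow> (nat \<Rightarrow> 'a set) \<Rightarrow> nat \<Rightarrow> bool" where
  "submodule_chain R f n \<longleftrightarrow> (\<forall>i\<le>n. submodule R (f i)) \<and> (\<forall>i<n. f i \<subset> f (Suc i))"

lemma rlength_altdef:
  "rlength R M N = (GREATEST n. \<exists>f. f 0 = N \<and> f n = M \<and> submodule_chain R f n)"
  unfolding rlength_def submodule_chain_def by meson

lemma submodule_chain_mono:
  assumes "submodule_chain R f n" "i \<le> j" "j \<le> n"
  shows "f i \<subseteq> f j"
  using assms(2,3)
proof (induction j)
  case (Suc j)
  then show ?case
    using assms(1) unfolding submodule_chain_def by (cases "i = Suc j") (auto simp: less_eq_Suc_le)
qed simp

lemma card_less_enumerate: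
  fixes S :: "nat set"
  assumes "infinite S"
  shows "card {y \<in> S. y < enumerate S i} = i"
proof -
  have "{y \<in> S. y < enumerate S i} = enumerate S ` {..<i}"
  proof
    show "{y \<in> S. y < enumerate S i} \<subseteq> enumerate S ` {..<i}"
    proof
      fix y assume y: "y \<in> {y \<in> S. y < enumerate S i}"
      then obtain j where "enumerate S j = y" using enumerate_Ex[OF assms] by blast
      then show "y \<in> enumerate S ` {..<i}" using y assms by auto
    qed
  qed (use assms enumerate_in_set in auto)
  then show ?thesis using inj_enumerate[OF assms] by (simp add: card_image inj_on_subset)
qed

lemma enumerate_eq_of_card_less:
  fixes S :: "nat set"
  assumes "infinite S" "s \<in> S" "card {y \<in> S. y < s} = i"
  shows "enumerate S i = s"
proof -
  obtain j where "enumerate S j = s" using enumerate_Ex[OF assms(1,2)] by blast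
  then show ?thesis using card_less_enumerate[OF assms(1), of j] assms(3) by simp
qed

lemma enumerate_Suc_le:
  fixes S :: "nat set"
  assumes "infinite S" "s \<in> S" "enumerate S i < s"
  shows "enumerate S (Suc i) \<le> s"
proof -
  obtain j where j: "enumerate S j = s" using enumerate_Ex[OF assms(1,2)] by blast
  then have "Suc i \<le> j" using assms by auto
  then show ?thesis using j enumerate_mono_le_iff[OF assms(1)] by metis
qed

lemma sum_card_diff_telescope:
  fixes X :: "nat \<Rightarrow> 'b set"
  assumes mono: "\<And>i. X i \<subseteq> X (Suc i)" and fin: "\<And>i j. finite (X j - X i)" and "a \<le> b"
  shows "(\<Sum>i\<in>{a<..b}. card (X i - X (i - 1))) = card (X b - X a)"
  using \<open>a \<le> b\<close>
proof (induction b)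
  case (Suc b)
  show ?case
  proof (cases "a = Suc b")
    case False
    then have ab: "a \<le> b" using Suc.prems by simp
    have "X a \<subseteq> X b" using lift_Suc_mono_le[of X, OF mono ab] .
    have "{a<..Suc b} = insert (Suc b) {a<..b}" using ab by auto
    then have "(\<Sum>i\<in>{a<..Suc b}. card (X i - X (i - 1))) = card (X (Suc b) - X b) + card (X b - X a)"
      using Suc.IH[OF ab] by simp
    also have "\<dots> = card ((X (Suc b) - X b) \<union> (X b - X a))"
      by (rule card_Un_disjoint[symmetric]) (use fin in auto)
    also have "(X (Suc b) - X b) \<union> (X b - X a) = X (Suc b) - X a"
      using mono[of b] \<open>X a \<subseteq> X b\<close> by blast
    finally show ?thesis .
  qed simp
qed simp

section \<open>Discrete valuations\<close>

locale discrete_val =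
  fixes v :: "'a::field \<Rightarrow> int"
  assumes discrete_valuation: "discrete_valuation v"
begin

lemma val_mult: "x \<noteq> 0 \<Longrightarrow> y \<noteq> 0 \<Longrightarrow> v (x * y) = v x + v y"
  and val_add_ge: "x \<noteq> 0 \<Longrightarrow> y \<noteq> 0 \<Longrightarrow> x + y \<noteq> 0 \<Longrightarrow> min (v x) (v y) \<le> v (x + y)"
  using discrete_valuation unfolding discrete_valuation_def by blast+

lemma val_one [simp]: "v 1 = 0"
  using val_mult[of 1 1] by simp

lemma val_minus [simp]: "v (- x) = v x"
proof (cases "x = 0")
  case False
  have "v (- 1) = 0" using val_mult[of "- 1" "- 1"] by simp
  then show ?thesis using val_mult[of "- 1" x] False by simp
qed simp

lemma val_divide: "x \<noteq> 0 \<Longrightarrow> y \<noteq> 0 \<Longrightarrow> v (x / y) = v x - v y"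
  using val_mult[of "x / y" y] by simp

lemma val_power: "x \<noteq> 0 \<Longrightarrow> v (x ^ m) = int m * v x"
  by (induction m) (simp_all add: val_mult algebra_simps)

lemma val_add_eq_left:
  assumes "x \<noteq> 0" "y \<noteq> 0" "v x < v y"
  shows "x + y \<noteq> 0" "v (x + y) = v x"
proof -
  show nz: "x + y \<noteq> 0"
    using assms by (metis add_eq_0_iff val_minus order_less_irrefl)
  have "v x \<le> v (x + y)" using val_add_ge[OF assms(1,2) nz] assms(3) by simp
  moreover have "min (v (x + y)) (v (- y)) \<le> v x"
    using val_add_ge[OF nz, of "- y"] assms(1,2) by simp
  ultimately show "v (x + y) = v x" using assms(3) by simp
qed

lemma val_diff_eq_left:
  assumes "x \<noteq> 0" "y \<noteq> 0" "v x < v y"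
  shows "x - y \<noteq> 0" "v (x - y) = v x"
  using val_add_eq_left[of x "- y"] assms by auto

lemma val_surj:
  obtains z where "z \<noteq> 0" "v z = k"
proof -
  obtain t where t: "t \<noteq> 0" "v t = 1" using discrete_valuation unfolding discrete_valuation_def by blast
  show ?thesis
  proof (cases "0 \<le> k")
    case True
    then show ?thesis using that[of "t ^ nat k"] t by (simp add: val_power)
  next
    case False
    then show ?thesis using that[of "inverse (t ^ nat (- k))"] t val_divide[of 1 "t ^ nat (- k)"]
      by (simp add: val_power divide_inverse)
  qed
qed

definition vals :: "'a set \<Rightarrow> nat set" where
  "vals M = {nat (v a) | a. a \<in> M \<and> a \<noteq> 0}"

definition val_ge :: "nat \<Rightarrow> 'a set" where
  "val_ge T = {z. z = 0 \<or> int T \<le> v z}"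

lemma val_ring_iff: "z \<in> val_ring v \<longleftrightarrow> z = 0 \<or> 0 \<le> v z"
  unfolding val_ring_def by simp

lemma vals_mono: "N \<subseteq> M \<Longrightarrow> vals N \<subseteq> vals M"
  unfolding vals_def by blast

lemma mem_valsI: "z \<in> M \<Longrightarrow> z \<noteq> 0 \<Longrightarrow> v z = int m \<Longrightarrow> m \<in> vals M"
  unfolding vals_def by force

lemma mem_valsE:
  assumes "m \<in> vals M" "M \<subseteq> val_ring v"
  obtains z where "z \<in> M" "z \<noteq> 0" "v z = int m"
proof -
  obtain z where "z \<in> M" "z \<noteq> 0" "m = nat (v z)" using assms(1) unfolding vals_def by blast
  moreover have "0 \<le> v z" using assms(2) \<open>z \<in> M\<close> \<open>z \<noteq> 0\<close> val_ring_iff by blast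
  ultimately show ?thesis using that by simp
qed

lemma vals_val_ring: "vals (val_ring v) = UNIV"
proof -
  have "m \<in> vals (val_ring v)" for m
    by (rule val_surj[of "int m"]) (metis mem_valsI of_nat_0_le_iff val_ring_iff)
  then show ?thesis by blast
qed

lemma val_ge_mono: "S \<le> T \<Longrightarrow> val_ge T \<subseteq> val_ge S"
  unfolding val_ge_def by auto

lemma val_ge_mult: "z \<in> val_ge T \<Longrightarrow> w \<in> val_ring v \<Longrightarrow> z * w \<in> val_ge T"
  unfolding val_ge_def val_ring_iff by (cases "z = 0 \<or> w = 0") (auto simp: val_mult)

end

section \<open>Lengths of modules between the conductor and the integral closure\<close>

locale branch = discrete_val v
  for R :: "'a::field set" and v :: "'a \<Rightarrow> int" +
  assumes subring: "subring R"
    and quotient_field: "quotient_field_of R"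
    and integral_closure_eq: "integral_closure R = val_ring v"
    and finite_closure: "\<exists>G. finite G \<and> G \<subseteq> val_ring v \<and> val_ring v = rspan R G"
    and residually_rational: "residually_rational R v"
begin

abbreviation Rbar where "Rbar \<equiv> val_ring v"
abbreviation S where "S \<equiv> value_set R v"
abbreviation c where "c \<equiv> cond_exp R v"
abbreviation conductor where "conductor \<equiv> val_ge c"

lemma R_0: "0 \<in> R"
  and R_1: "1 \<in> R"
  and R_add: "a \<in> R \<Longrightarrow> b \<in> R \<Longrightarrow> a + b \<in> R"
  and R_mult: "a \<in> R \<Longrightarrow> b \<in> R \<Longrightarrow> a * b \<in> R"
  and R_uminus: "a \<in> R \<Longrightarrow> - a \<in> R"
  using subring unfolding subring_def by auto

lemma R_diff: "a \<in> R \<Longrightarrow> b \<in> R \<Longrightarrow> a - b \<in> R"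
  using R_add[of a "- b"] R_uminus[of b] by simp

lemma R_sum: "finite A \<Longrightarrow> (\<And>i. i \<in> A \<Longrightarrow> f i \<in> R) \<Longrightarrow> sum f A \<in> R"
  by (induction A rule: finite_induct) (auto intro: R_0 R_add)

lemma R_prod: "finite A \<Longrightarrow> (\<And>i. i \<in> A \<Longrightarrow> f i \<in> R) \<Longrightarrow> prod f A \<in> R"
  by (induction A rule: finite_induct) (auto intro: R_1 R_mult)

lemma R_power: "a \<in> R \<Longrightarrow> a ^ m \<in> R"
  by (induction m) (auto intro: R_1 R_mult)

lemma R_subset_Rbar: "R \<subseteq> Rbar"
proof
  fix a assume "a \<in> R"
  then have "a \<in> integral_closure R"
    unfolding integral_closure_def by (auto intro!: exI[of _ 1] exI[of _ "\<lambda>_. - a"] R_uminus)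
  then show "a \<in> Rbar" using integral_closure_eq by simp
qed

lemma val_nonneg: "a \<in> R \<Longrightarrow> a \<noteq> 0 \<Longrightarrow> 0 \<le> v a"
  using R_subset_Rbar val_ring_iff by blast

lemma value_set_eq: "S = vals R"
  unfolding value_set_def vals_def by simp

lemma nat_val_mem_value_set: "a \<in> R \<Longrightarrow> a \<noteq> 0 \<Longrightarrow> nat (v a) \<in> S"
  unfolding value_set_def by blast

lemma value_setE:
  assumes "s \<in> S"
  obtains a where "a \<in> R" "a \<noteq> 0" "v a = int s"
  using mem_valsE[of s R] assms R_subset_Rbar value_set_eq by blast

lemma zero_mem_value_set: "0 \<in> S"
  using nat_val_mem_value_set[OF R_1] by simp

lemma value_set_add:
  assumes "s \<in> S" "t \<in> S"
  shows "s + t \<in> S"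
proof -
  obtain a b where "a \<in> R" "a \<noteq> 0" "v a = int s" "b \<in> R" "b \<noteq> 0" "v b = int t"
    using assms by (meson value_setE)
  then have "a * b \<in> R" "a * b \<noteq> 0" "nat (v (a * b)) = s + t" by (simp_all add: R_mult val_mult)
  then show ?thesis using nat_val_mem_value_set by metis
qed

lemma inverse_mem_of_val_eq_0:
  assumes a: "a \<in> R" "a \<noteq> 0" "v a = 0"
  shows "inverse a \<in> R"
proof -
  have "inverse a \<in> integral_closure R"
    using a val_divide[of 1 a] integral_closure_eq by (simp add: val_ring_iff divide_inverse)
  then obtain n f where f: "\<forall>i<n. f i \<in> R" "inverse a ^ n + (\<Sum>i<n. f i * inverse a ^ i) = 0"
    unfolding integral_closure_def by blast
  obtain m where m: "n = Suc m" using f(2) by (cases n) auto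
  have "a ^ m * (inverse a ^ n + (\<Sum>i<n. f i * inverse a ^ i)) = 0" using f by simp
  moreover have "a ^ m * inverse a ^ n = inverse a"
    using m a(2) by (simp add: power_inverse field_simps)
  moreover have "a ^ m * (f i * inverse a ^ i) = f i * a ^ (m - i)" if "i < n" for i
  proof -
    have "a ^ m = a ^ (m - i) * a ^ i" using that m by (simp flip: power_add)
    then show ?thesis using a(2) by (simp add: power_inverse field_simps)
  qed
  ultimately have "inverse a = - (\<Sum>i<n. f i * a ^ (m - i))"
    by (simp add: distrib_left sum_distrib_left eq_neg_iff_add_eq_0)
  moreover have "(\<Sum>i<n. f i * a ^ (m - i)) \<in> R"
    using f(1) a(1) by (auto intro!: R_sum R_mult R_power)
  ultimately show ?thesis using R_uminus by simp
qed

lemma nonunits_eq: "nonunits R = {a \<in> R. a = 0 \<or> 0 < v a}"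
proof (intro set_eqI iffI)
  fix a assume a: "a \<in> nonunits R"
  then have "a \<in> R" unfolding nonunits_def by simp
  moreover have "a = 0 \<or> 0 < v a"
  proof (rule ccontr)
    assume "\<not> (a = 0 \<or> 0 < v a)"
    then have "a \<noteq> 0" "v a = 0" using val_nonneg \<open>a \<in> R\<close> by force+
    then show False
      using a inverse_mem_of_val_eq_0 \<open>a \<in> R\<close> unfolding nonunits_def by fastforce
  qed
  ultimately show "a \<in> {a \<in> R. a = 0 \<or> 0 < v a}" by simp
next
  fix a assume a: "a \<in> {a \<in> R. a = 0 \<or> 0 < v a}"
  have "a * b \<noteq> 1" if "b \<in> R" for b
  proof
    assume ab: "a * b = 1"
    then have "a \<noteq> 0" "b \<noteq> 0" by auto
    then have "v a + v b = 0" using val_mult ab by (metis val_one)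
    then show False using a val_nonneg[OF that \<open>b \<noteq> 0\<close>] \<open>a \<noteq> 0\<close> by simp
  qed
  then show "a \<in> nonunits R" using a unfolding nonunits_def by blast
qed

lemma submodule_R: "submodule R R"
  unfolding submodule_def using R_0 R_add R_mult by blast

lemma submodule_diff: "submodule R M \<Longrightarrow> x \<in> M \<Longrightarrow> y \<in> M \<Longrightarrow> x - y \<in> M"
  using submodule_add[of R M x "- y"] submodule_smult[of R M "- 1" y] R_1 R_uminus by simp

lemma submodule_val_ge: "submodule R (val_ge T)"
proof -
  have "x + y \<in> val_ge T" if "x \<in> val_ge T" "y \<in> val_ge T" for x y
    using that val_add_ge[of x y] unfolding val_ge_def by (cases "x = 0 \<or> y = 0 \<or> x + y = 0") force+
  moreover have "a * x \<in> val_ge T" if "a \<in> R" "x \<in> val_ge T" for a x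
    using val_ge_mult[of x T a] that R_subset_Rbar by (auto simp: mult.commute)
  ultimately show ?thesis
    unfolding submodule_def by (auto simp: val_ge_def)
qed

lemma val_ge_0: "val_ge 0 = Rbar"
  unfolding val_ge_def val_ring_def by simp

lemma submodule_Rbar: "submodule R Rbar"
  using submodule_val_ge[of 0] val_ge_0 by simp

lemma common_denominator: "\<exists>d\<in>R. d \<noteq> 0 \<and> (\<forall>z\<in>Rbar. d * z \<in> R)"
proof -
  obtain G where G: "finite G" "Rbar = rspan R G" using finite_closure by blast
  have "\<forall>g. \<exists>b. b \<in> R \<and> b \<noteq> 0 \<and> g * b \<in> R"
  proof
    fix g
    obtain a b where "a \<in> R" "b \<in> R" "b \<noteq> 0" "g = a / b"
      using quotient_field[unfolded quotient_field_of_def, rule_format, of g] by blast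
    then show "\<exists>b. b \<in> R \<and> b \<noteq> 0 \<and> g * b \<in> R" by (intro exI[of _ b]) simp
  qed
  from choice[OF this] obtain den where "\<forall>g. den g \<in> R \<and> den g \<noteq> 0 \<and> g * den g \<in> R" ..
  then have den: "den g \<in> R" "den g \<noteq> 0" "g * den g \<in> R" for g by simp_all
  define d where "d = (\<Prod>g\<in>G. den g)"
  have dR: "d \<in> R" "d \<noteq> 0" unfolding d_def using G(1) den by (auto intro: R_prod)
  have dg: "d * g \<in> R" if "g \<in> G" for g
  proof -
    have "d * g = (g * den g) * (\<Prod>h\<in>G-{g}. den h)"
      unfolding d_def using G(1) that by (simp add: prod.remove)
    also have "\<dots> \<in> R" using G(1) den(1) by (simp add: R_mult[OF den(3)] R_prod)
    finally show ?thesis .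
  qed
  have "d * z \<in> R" if "z \<in> Rbar" for z
  proof -
    have "z \<in> rspan R G" using that G(2) by simp
    then obtain f where f: "z = (\<Sum>g\<in>G. f g * g)" "\<forall>g\<in>G. f g \<in> R"
      unfolding rspan_def by blast
    have "d * z = (\<Sum>g\<in>G. f g * (d * g))"
      unfolding f(1) sum_distrib_left by (simp add: mult.left_commute)
    also have "\<dots> \<in> R" by (rule R_sum[OF G(1)]) (simp add: R_mult f(2) dg)
    finally show ?thesis .
  qed
  then show ?thesis using dR by blast
qed

text \<open>Finiteness of the integral closure over R enters here: it makes c well defined.\<close>
lemma exists_val_ge_subset_R: "\<exists>D. val_ge D \<subseteq> R"
proof -
  obtain d where d: "d \<in> R" "d \<noteq> 0" "\<forall>z\<in>Rbar. d * z \<in> R" using common_denominator by blast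
  have "z \<in> R" if "z \<in> val_ge (nat (v d))" for z
  proof (cases "z = 0")
    case False
    have "v d \<le> v z" using that False val_nonneg[OF d(1,2)] unfolding val_ge_def by auto
    then have "0 \<le> v (z / d)" using val_divide[OF False d(2)] by simp
    then have "z / d \<in> Rbar" using val_ring_iff by blast
    then have "d * (z / d) \<in> R" by (rule d(3)[rule_format])
    then show ?thesis using d(2) by simp
  qed (simp add: R_0)
  then show ?thesis by blast
qed

lemma cond_exp_mem: "c \<in> S"
  and cond_exp_add_mem: "c + j \<in> S"
  and cond_exp_least: "c' \<in> S \<Longrightarrow> \<forall>j. c' + j \<in> S \<Longrightarrow> c \<le> c'"
proof -
  obtain D where D: "val_ge D \<subseteq> R" using exists_val_ge_subset_R by blast
  have DS: "D + j \<in> S" for j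
  proof (rule val_surj[of "int (D + j)"])
    fix z assume "z \<noteq> 0" "v z = int (D + j)"
    then have "z \<in> R" using D unfolding val_ge_def by auto
    moreover have "nat (v z) = D + j" using \<open>v z = int (D + j)\<close> by simp
    ultimately show "D + j \<in> S" using nat_val_mem_value_set[of z] \<open>z \<noteq> 0\<close> by simp
  qed
  have "D \<in> S \<and> (\<forall>j. D + j \<in> S)" using DS[of 0] DS by simp
  then have "c \<in> S \<and> (\<forall>j. c + j \<in> S)" unfolding cond_exp_def by (rule LeastI)
  then show "c \<in> S" "c + j \<in> S" by simp_all
  show "c \<le> c'" if "c' \<in> S" "\<forall>j. c' + j \<in> S"
    unfolding cond_exp_def using that by (simp add: Least_le)
qed

lemma mem_value_set_of_ge: "c \<le> m \<Longrightarrow> m \<in> S"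
  using cond_exp_add_mem[of "m - c"] by simp

lemma infinite_value_set: "infinite S"
proof
  assume "finite S"
  then have "Max S + c + 1 \<in> S" "Max S + c + 1 \<le> Max S"
    using mem_value_set_of_ge by auto
  then show False by simp
qed

lemma residual_lift:
  assumes "z \<noteq> 0" "a \<noteq> 0" "v a = v z"
  obtains l where "l \<in> R" "z - l * a = 0 \<or> v z < v (z - l * a)"
proof -
  have "v (z / a) = 0" using val_divide assms by simp
  then have "z / a \<in> Rbar" using val_ring_iff by simp
  with residually_rational obtain l where l: "l \<in> R" "z / a = l \<or> 0 < v (z / a - l)"
    unfolding residually_rational_def by blast
  have eq: "z - l * a = a * (z / a - l)" using assms(2) by (simp add: algebra_simps)
  have "v z < v (z - l * a)" if "z - l * a \<noteq> 0"
  proof -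
    have nz: "z / a - l \<noteq> 0" using that eq by auto
    then have "0 < v (z / a - l)" using l(2) by auto
    then show ?thesis using eq val_mult[OF assms(2) nz] assms(3) by simp
  qed
  then show ?thesis using that l(1) by blast
qed

text \<open>Cancelling leading terms by residual rationality raises the value of an element of M
  outside N until it lands in val_ge T \<subseteq> N.\<close>
lemma submodule_subset_of_vals:
  assumes N: "submodule R N" and M: "submodule R M" "M \<subseteq> Rbar"
    and large: "val_ge T \<subseteq> N"
    and lift: "\<And>z. z \<in> M \<Longrightarrow> z \<noteq> 0 \<Longrightarrow> \<exists>a\<in>N \<inter> M. a \<noteq> 0 \<and> v a = v z"
  shows "M \<subseteq> N"
proof -
  have "z \<in> N" if "z \<in> M" "z \<noteq> 0" "int T - int j \<le> v z" for z j
    using that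
  proof (induction j arbitrary: z)
    case 0
    then show ?case using large unfolding val_ge_def by auto
  next
    case (Suc j)
    obtain a where a: "a \<in> N" "a \<in> M" "a \<noteq> 0" "v a = v z" using lift Suc.prems(1,2) by blast
    obtain l where l: "l \<in> R" "z - l * a = 0 \<or> v z < v (z - l * a)"
      using residual_lift[OF Suc.prems(2) a(3,4)] by blast
    have "z - l * a \<in> N"
    proof (cases "z - l * a = 0")
      case False
      moreover have "z - l * a \<in> M" using submodule_diff[OF M(1) Suc.prems(1) submodule_smult[OF M(1) l(1) a(2)]] .
      ultimately show ?thesis using Suc.IH l(2) Suc.prems(3) by simp
    qed (simp add: submodule_zero[OF N])
    then have "(z - l * a) + l * a \<in> N" using submodule_add[OF N] submodule_smult[OF N l(1) a(1)] by blast
    then show ?case by simp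
  qed
  moreover have "0 \<le> v z" if "z \<in> M" "z \<noteq> 0" for z using that M(2) val_ring_iff by blast
  ultimately show ?thesis using submodule_zero[OF N] by (metis diff_self subsetI)
qed

lemma conductor_subset_Rbar: "conductor \<subseteq> Rbar"
  using val_ge_mono[of 0 c] val_ge_0 by simp

lemma conductor_subset_R: "conductor \<subseteq> R"
proof -
  obtain D where D: "val_ge D \<subseteq> R" using exists_val_ge_subset_R by blast
  have lift: "\<exists>a\<in>R \<inter> conductor. a \<noteq> 0 \<and> v a = v z" if "z \<in> conductor" "z \<noteq> 0" for z
  proof -
    have vz: "int c \<le> v z" using that unfolding val_ge_def by simp
    then have "c \<le> nat (v z)" by linarith
    then have "nat (v z) \<in> S" by (rule mem_value_set_of_ge)
    then obtain a where a: "a \<in> R" "a \<noteq> 0" "v a = int (nat (v z))" by (rule value_setE)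
    have "v a = v z" using a(3) vz by linarith
    moreover have "a \<in> conductor" using \<open>v a = v z\<close> vz unfolding val_ge_def by simp
    ultimately show ?thesis using a(1,2) by blast
  qed
  show ?thesis
    by (rule submodule_subset_of_vals[OF submodule_R submodule_val_ge conductor_subset_Rbar D lift])
qed

definition above_conductor :: "'a set \<Rightarrow> bool" where
  "above_conductor M \<longleftrightarrow> submodule R M \<and> conductor \<subseteq> M \<and> M \<subseteq> Rbar"

lemma above_conductor_R: "above_conductor R"
  unfolding above_conductor_def using submodule_R conductor_subset_R R_subset_Rbar by blast

lemma mem_vals_of_ge:
  assumes "conductor \<subseteq> N" "c \<le> m"
  shows "m \<in> vals N"
proof (rule val_surj[of "int m"])
  fix z assume "z \<noteq> 0" "v z = int m"
  moreover from this have "z \<in> N" using assms unfolding val_ge_def by auto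
  ultimately show ?thesis by (rule mem_valsI[rotated])
qed

lemma vals_diff_subset:
  assumes "conductor \<subseteq> N"
  shows "vals M - vals N \<subseteq> {..<c}"
proof
  fix m assume "m \<in> vals M - vals N"
  then have "\<not> c \<le> m" using mem_vals_of_ge[OF assms] by blast
  then show "m \<in> {..<c}" by simp
qed

lemma finite_vals_diff: "conductor \<subseteq> N \<Longrightarrow> finite (vals M - vals N)"
  by (rule finite_subset[OF vals_diff_subset]) simp_all

lemma eq_if_vals_subset:
  assumes N: "above_conductor N" and M: "submodule R M" "N \<subseteq> M" "M \<subseteq> Rbar"
    and vals: "vals M \<subseteq> vals N"
  shows "M = N"
proof -
  have "\<exists>a\<in>N \<inter> M. a \<noteq> 0 \<and> v a = v z" if "z \<in> M" "z \<noteq> 0" for z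
  proof -
    have "nat (v z) \<in> vals N" using that vals unfolding vals_def by blast
    then obtain a where "a \<in> N" "a \<noteq> 0" "v a = int (nat (v z))"
      using mem_valsE N unfolding above_conductor_def by blast
    moreover have "0 \<le> v z" using that M(3) val_ring_iff by blast
    ultimately show ?thesis using M(2) by auto
  qed
  then have "M \<subseteq> N"
    using submodule_subset_of_vals[OF _ M(1,3), where T = c] N unfolding above_conductor_def by blast
  then show ?thesis using M(2) by (rule subset_antisym)
qed

lemma vals_psubset:
  assumes "above_conductor N" "submodule R M" "N \<subset> M" "M \<subseteq> Rbar"
  shows "vals N \<subset> vals M"
proof -
  have sub: "N \<subseteq> M" "N \<noteq> M" using assms(3) by auto
  then have "\<not> vals M \<subseteq> vals N" using eq_if_vals_subset[OF assms(1,2) sub(1) assms(4)] by auto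
  then show ?thesis using vals_mono[OF sub(1)] by auto
qed

lemma chain_length_le_card_vals:
  assumes N: "above_conductor N" and M: "M \<subseteq> Rbar"
    and f: "f 0 = N" "f n = M" "submodule_chain R f n"
  shows "n \<le> card (vals M - vals N)"
proof -
  have fN: "N \<subseteq> f i" and fM: "f i \<subseteq> M" if "i \<le> n" for i
    using submodule_chain_mono[OF f(3), of 0 i] submodule_chain_mono[OF f(3), of i n] that f(1,2) by auto
  have "i \<le> card (vals (f i) - vals N)" if "i \<le> n" for i
    using that
  proof (induction i)
    case (Suc i)
    have above: "above_conductor (f i)"
      using N fN[of i] fM[of i] f(3) Suc.prems M unfolding above_conductor_def submodule_chain_def by auto
    have step: "f i \<subset> f (Suc i)" "submodule R (f (Suc i))"
      using f(3) Suc.prems unfolding submodule_chain_def by auto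
    have "f (Suc i) \<subseteq> Rbar" using fM[OF Suc.prems] M by (rule order_trans)
    then have "vals (f i) \<subset> vals (f (Suc i))" by (rule vals_psubset[OF above step(2,1)])
    then have "vals (f i) - vals N \<subset> vals (f (Suc i)) - vals N"
      using vals_mono[OF fN[of i]] Suc.prems by auto
    moreover have "finite (vals (f (Suc i)) - vals N)"
      using finite_vals_diff N unfolding above_conductor_def by simp
    ultimately have "card (vals (f i) - vals N) < card (vals (f (Suc i)) - vals N)"
      by (rule psubset_card_mono[rotated])
    moreover have "i \<le> card (vals (f i) - vals N)" using Suc.IH Suc.prems by simp
    ultimately show ?case by linarith
  qed simp
  from this[of n] show ?thesis using f(2) by simp
qed

lemma above_conductor_add_val_ge:
  assumes N: "above_conductor N" and M: "submodule R M" "N \<subseteq> M" "M \<subseteq> Rbar"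
  shows "N \<subseteq> N + (M \<inter> val_ge d)" "N + (M \<inter> val_ge d) \<subseteq> M"
    "above_conductor (N + (M \<inter> val_ge d))"
proof -
  have "0 \<in> M \<inter> val_ge d" using submodule_zero[OF M(1)] unfolding val_ge_def by simp
  from set_plus_intro[OF _ this] show sub: "N \<subseteq> N + (M \<inter> val_ge d)" by (metis add_0_right subsetI)
  show sup: "N + (M \<inter> val_ge d) \<subseteq> M"
  proof
    fix w assume "w \<in> N + (M \<inter> val_ge d)"
    then obtain p q where "w = p + q" "p \<in> N" "q \<in> M" by (auto elim!: set_plus_elim)
    then show "w \<in> M" using submodule_add[OF M(1)] M(2) by blast
  qed
  have "submodule R (N + (M \<inter> val_ge d))"
    using N M(1) submodule_set_plus submodule_Int submodule_val_ge unfolding above_conductor_def by blast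
  then show "above_conductor (N + (M \<inter> val_ge d))"
    using sub sup N M(3) unfolding above_conductor_def by blast
qed

lemma vals_add_val_ge_below:
  assumes N: "above_conductor N" and M: "submodule R M" "N \<subseteq> M" "M \<subseteq> Rbar"
    and y: "y \<in> vals (N + (M \<inter> val_ge d))" "y < d"
  shows "y \<in> vals N"
proof -
  obtain w where w: "w \<in> N + (M \<inter> val_ge d)" "w \<noteq> 0" "v w = int y"
    using y(1) above_conductor_add_val_ge(2)[OF N M] M(3) by (blast elim: mem_valsE)
  then obtain p q where pq: "w = p + q" "p \<in> N" "q \<in> val_ge d"
    by (auto elim!: set_plus_elim)
  show ?thesis
  proof (cases "q = 0")
    case True
    then show ?thesis using mem_valsI[of p N y] pq(1,2) w(2,3) by simp
  next
    case False
    then have "v w < v q" using pq(3) w(3) y(2) unfolding val_ge_def by simp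
    then have "w - q \<noteq> 0" "v (w - q) = v w" using val_diff_eq_left[OF w(2) False] by simp_all
    then show ?thesis using mem_valsI[of p N y] pq(1,2) w(3) by simp
  qed
qed

lemma vals_add_val_ge:
  assumes N: "above_conductor N" and M: "submodule R M" "N \<subseteq> M" "M \<subseteq> Rbar"
    and d: "d \<in> vals M - vals N" "\<And>y. y \<in> vals M - vals N \<Longrightarrow> y \<le> d"
  shows "vals (N + (M \<inter> val_ge d)) = insert d (vals N)"
proof
  have "vals N \<subseteq> vals (N + (M \<inter> val_ge d))"
    using above_conductor_add_val_ge(1)[OF N M] by (rule vals_mono)
  moreover have "d \<in> vals (N + (M \<inter> val_ge d))"
  proof -
    obtain a where a: "a \<in> M" "a \<noteq> 0" "v a = int d" using d(1) M(3) by (blast elim: mem_valsE)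
    then have "a \<in> M \<inter> val_ge d" unfolding val_ge_def by simp
    moreover have "0 \<in> N" using N submodule_zero unfolding above_conductor_def by blast
    ultimately have "0 + a \<in> N + (M \<inter> val_ge d)" by (intro set_plus_intro)
    then show ?thesis using a(2,3) by (simp add: mem_valsI)
  qed
  ultimately show "insert d (vals N) \<subseteq> vals (N + (M \<inter> val_ge d))" by simp
next
  show "vals (N + (M \<inter> val_ge d)) \<subseteq> insert d (vals N)"
  proof
    fix y assume y: "y \<in> vals (N + (M \<inter> val_ge d))"
    show "y \<in> insert d (vals N)"
    proof (cases "d \<le> y")
      case True
      have "y \<in> vals M" using y vals_mono[OF above_conductor_add_val_ge(2)[OF N M]] by blast
      then show ?thesis using d(2)[of y] True by fastforce
    qed (use vals_add_val_ge_below[OF N M y] in simp)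
  qed
qed

lemma exists_chain_card_vals:
  assumes "above_conductor N" "submodule R M" "N \<subseteq> M" "M \<subseteq> Rbar"
  shows "\<exists>f. f 0 = N \<and> f (card (vals M - vals N)) = M \<and> submodule_chain R f (card (vals M - vals N))"
  using assms
proof (induction "card (vals M - vals N)" arbitrary: N)
  case 0
  then have "vals M \<subseteq> vals N" using finite_vals_diff unfolding above_conductor_def by auto
  then have "M = N" using eq_if_vals_subset 0 by blast
  then show ?case using 0 by (intro exI[of _ "\<lambda>_. M"]) (simp add: submodule_chain_def)
next
  case (Suc m N)
  define D where "D = vals M - vals N"
  have finD: "finite D" using finite_vals_diff Suc.prems(1) unfolding D_def above_conductor_def by blast
  have "D \<noteq> {}" using Suc.hyps(2) unfolding D_def by (metis card.empty nat.distinct(1))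
  define d where "d = Max D"
  have d: "d \<in> D" "\<And>y. y \<in> D \<Longrightarrow> y \<le> d" unfolding d_def using finD \<open>D \<noteq> {}\<close> by auto
  define N' where "N' = N + (M \<inter> val_ge d)"
  have vals': "vals N' = insert d (vals N)"
    unfolding N'_def by (rule vals_add_val_ge[OF Suc.prems]) (use d in \<open>simp_all add: D_def\<close>)
  note between = above_conductor_add_val_ge[OF Suc.prems, of d, folded N'_def]
  have "N \<noteq> N'" using vals' d(1) unfolding D_def by auto
  then have NN': "N \<subset> N'" using between(1) by simp
  have "vals M - vals N' = D - {d}" unfolding vals' D_def by auto
  then have "card (vals M - vals N') = m" using Suc.hyps(2) d(1) finD unfolding D_def by simp
  then obtain f where f: "f 0 = N'" "f m = M" "submodule_chain R f m"
    using Suc.hyps(1)[OF _ between(3) Suc.prems(2) between(2) Suc.prems(4)] by metis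
  define g where "g i = (case i of 0 \<Rightarrow> N | Suc j \<Rightarrow> f j)" for i
  have "submodule_chain R g (Suc m)"
    using f NN' Suc.prems(1) unfolding submodule_chain_def g_def above_conductor_def
    by (auto split: nat.split simp: less_Suc_eq_0_disj)
  moreover have "g 0 = N" "g (Suc m) = M" unfolding g_def using f by simp_all
  ultimately show ?case using Suc.hyps(2) by metis
qed

lemma rlength_eq_card_vals:
  assumes "above_conductor N" "submodule R M" "N \<subseteq> M" "M \<subseteq> Rbar"
  shows "rlength R M N = card (vals M - vals N)"
  unfolding rlength_altdef
proof (rule Greatest_equality)
  show "\<exists>f. f 0 = N \<and> f (card (vals M - vals N)) = M \<and> submodule_chain R f (card (vals M - vals N))"
    using exists_chain_card_vals[OF assms] .
  show "n \<le> card (vals M - vals N)" if "\<exists>f. f 0 = N \<and> f n = M \<and> submodule_chain R f n" for n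
    using that chain_length_le_card_vals assms(1,4) by blast
qed

end

section \<open>The filtration by the R_i and the numbers r_i\<close>

locale singular_branch = branch +
  assumes cond_exp_pos: "0 < cond_exp R v"
begin

lemma pred_cond_exp_not_mem: "c - 1 \<notin> S"
proof
  assume "c - 1 \<in> S"
  moreover have "c - 1 + j \<in> S" for j
    using \<open>c - 1 \<in> S\<close> mem_value_set_of_ge[of "c - 1 + j"] by (cases j) auto
  ultimately have "c \<le> c - 1" by (intro cond_exp_least) auto
  then show False using cond_exp_pos by simp
qed

lemma not_mem_R_of_val_pred_cond_exp:
  assumes "z \<noteq> 0" "v z = int c - 1"
  shows "z \<notin> R"
proof
  assume "z \<in> R"
  then have "nat (v z) \<in> S" using assms(1) by (rule nat_val_mem_value_set)
  moreover have "nat (v z) = c - 1" using assms(2) cond_exp_pos by simp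
  ultimately show False using pred_cond_exp_not_mem by simp
qed

lemma val_of_mem_colon_val_ge:
  assumes "z \<in> colon R (val_ge T)" "z \<noteq> 0"
  shows "int c \<le> v z + int T"
proof (rule ccontr)
  assume "\<not> int c \<le> v z + int T"
  obtain w where w: "w \<noteq> 0" "v w = int c - 1 - v z" by (rule val_surj)
  have "w \<in> val_ge T" using w \<open>\<not> int c \<le> v z + int T\<close> unfolding val_ge_def by simp
  then have "z * w \<in> R" using assms(1) unfolding colon_def by blast
  moreover have "v (z * w) = int c - 1" using val_mult[OF assms(2) w(1)] w(2) by simp
  ultimately show False using not_mem_R_of_val_pred_cond_exp assms(2) w(1) by simp
qed

lemma colon_conductor: "colon R conductor = Rbar"
proof
  show "colon R conductor \<subseteq> Rbar"
  proof
    fix z assume z: "z \<in> colon R conductor"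
    show "z \<in> Rbar"
    proof (cases "z = 0")
      case False
      then show ?thesis using val_of_mem_colon_val_ge[OF z False] val_ring_iff by simp
    qed (simp add: val_ring_iff)
  qed
  show "Rbar \<subseteq> colon R conductor"
  proof
    fix z assume "z \<in> Rbar"
    then have "b * z \<in> R" if "b \<in> conductor" for b using val_ge_mult[OF that] conductor_subset_R by blast
    then show "z \<in> colon R conductor" unfolding colon_def by (simp add: mult.commute)
  qed
qed

lemma colon_Rbar: "colon R Rbar = conductor"
proof
  show "colon R Rbar \<subseteq> conductor"
  proof
    fix z assume "z \<in> colon R Rbar"
    then have z: "z \<in> colon R (val_ge 0)" by (simp add: val_ge_0)
    show "z \<in> conductor"
    proof (cases "z = 0")
      case False
      then show ?thesis using val_of_mem_colon_val_ge[OF z False] unfolding val_ge_def by simp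
    qed (simp add: val_ge_def)
  qed
  show "conductor \<subseteq> colon R Rbar"
  proof
    fix z assume "z \<in> conductor"
    then have "z * b \<in> R" if "b \<in> Rbar" for b using val_ge_mult[OF _ that] conductor_subset_R by blast
    then show "z \<in> colon R Rbar" unfolding colon_def by simp
  qed
qed

abbreviation e where "e \<equiv> mult_e R v"

lemma mult_e_mem: "e \<in> S"
  and mult_e_pos: "0 < e"
  and mult_e_least: "y \<in> S \<Longrightarrow> 0 < y \<Longrightarrow> e \<le> y"
proof -
  have "c \<in> S \<and> 0 < c" by (rule conjI[OF cond_exp_mem cond_exp_pos])
  then have "e \<in> S \<and> 0 < e" unfolding mult_e_def by (rule LeastI[of "\<lambda>y. y \<in> S \<and> 0 < y"])
  then show "e \<in> S" "0 < e" by simp_all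
  show "e \<le> y" if "y \<in> S" "0 < y" unfolding mult_e_def using that by (simp add: Least_le)
qed

lemma mult_e_le_cond_exp: "e \<le> c"
  using mult_e_least[OF cond_exp_mem cond_exp_pos] .

lemma val_ge_mult_e:
  assumes "a \<in> R" "a \<noteq> 0" "0 < v a"
  shows "int e \<le> v a"
proof -
  have "e \<le> nat (v a)" using mult_e_least[OF nat_val_mem_value_set[OF assms(1,2)]] assms(3) by simp
  then show ?thesis using assms(3) by (simp add: le_nat_iff)
qed

abbreviation sv where "sv i \<equiv> sval R v i"

lemma sv_mem: "sv i \<in> S"
  unfolding sval_def using enumerate_in_set[OF infinite_value_set] .

lemma sv_less_iff [simp]: "sv i < sv j \<longleftrightarrow> i < j"
  and sv_le_iff [simp]: "sv i \<le> sv j \<longleftrightarrow> i \<le> j"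
  unfolding sval_def using infinite_value_set by simp_all

lemma sv_Suc_le: "s \<in> S \<Longrightarrow> sv i < s \<Longrightarrow> sv (Suc i) \<le> s"
  unfolding sval_def using enumerate_Suc_le[OF infinite_value_set] .

lemma card_less_sv: "card {y \<in> S. y < sv i} = i"
  unfolding sval_def using card_less_enumerate[OF infinite_value_set] .

lemma sv_eq_of_card_less: "s \<in> S \<Longrightarrow> card {y \<in> S. y < s} = i \<Longrightarrow> sv i = s"
  unfolding sval_def using enumerate_eq_of_card_less[OF infinite_value_set] .

lemma sv_0: "sv 0 = 0"
  using sv_eq_of_card_less[OF zero_mem_value_set] by simp

lemma sv_1: "sv 1 = e"
proof -
  have "y \<in> S \<and> y < e \<longleftrightarrow> y = 0" for y
    using mult_e_least[of y] mult_e_pos zero_mem_value_set by (cases "y = 0") auto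
  then have "{y \<in> S. y < e} = {0}" by blast
  then show ?thesis using sv_eq_of_card_less[OF mult_e_mem] by simp
qed

text \<open>The n = c - \<delta> of the paper.\<close>
definition ncond where "ncond = card {y \<in> S. y < c}"

lemma sv_ncond: "sv ncond = c"
  using sv_eq_of_card_less[OF cond_exp_mem] unfolding ncond_def by simp

lemma card_gaps: "card (UNIV - S) = c - ncond"
proof -
  have "UNIV - S = {..<c} - {y \<in> S. y < c}"
  proof (rule set_eqI)
    fix y show "y \<in> UNIV - S \<longleftrightarrow> y \<in> {..<c} - {y \<in> S. y < c}"
      using mem_value_set_of_ge[of y] by (cases "c \<le> y") auto
  qed
  moreover have "{y \<in> S. y < c} \<subseteq> {..<c}" by auto
  moreover from this have "finite {y \<in> S. y < c}" by (rule finite_subset) simp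
  ultimately show ?thesis unfolding ncond_def by (simp only: card_Diff_subset card_lessThan)
qed

lemma ncond_le_cond_exp: "ncond \<le> c"
proof -
  have "{y \<in> S. y < c} \<subseteq> {..<c}" by auto
  from card_mono[OF finite_lessThan this] show ?thesis unfolding ncond_def by simp
qed

lemma Rfilt_eq: "Rfilt R v i = R \<inter> val_ge (sv i)"
  unfolding Rfilt_def val_ge_def by auto

lemma Rfilt_anti_mono: "i \<le> j \<Longrightarrow> Rfilt R v j \<subseteq> Rfilt R v i"
  unfolding Rfilt_eq using val_ge_mono[of "sv i" "sv j"] by auto

lemma Rfilt_subset: "Rfilt R v i \<subseteq> R"
  unfolding Rfilt_eq by blast

lemma Rfilt_0: "Rfilt R v 0 = R"
  unfolding Rfilt_eq sv_0 val_ge_0 using R_subset_Rbar by blast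

lemma conductor_subset_Rfilt: "i \<le> ncond \<Longrightarrow> conductor \<subseteq> Rfilt R v i"
  unfolding Rfilt_eq using conductor_subset_R val_ge_mono[of "sv i" c] sv_ncond
  by (metis Int_greatest sv_le_iff)

lemma Rfilt_ncond: "Rfilt R v ncond = conductor"
  unfolding Rfilt_eq sv_ncond using conductor_subset_R by blast

lemma Rfilt_1: "Rfilt R v 1 = nonunits R"
proof -
  have "a = 0 \<or> int e \<le> v a \<longleftrightarrow> a = 0 \<or> 0 < v a" if "a \<in> R" for a
    using val_ge_mult_e[OF that] mult_e_pos by auto
  then show ?thesis unfolding Rfilt_eq sv_1 nonunits_eq val_ge_def by auto
qed

lemma mem_Rfilt_Suc:
  assumes "a \<in> R" "a \<noteq> 0" "int (sv i) < v a"
  shows "a \<in> Rfilt R v (Suc i)"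
proof -
  have "sv i < nat (v a)" using assms(3) by linarith
  then have "sv (Suc i) \<le> nat (v a)" using sv_Suc_le nat_val_mem_value_set[OF assms(1,2)] by blast
  then have "int (sv (Suc i)) \<le> v a" using assms(3) by linarith
  then show ?thesis using assms(1) unfolding Rfilt_eq val_ge_def by simp
qed

lemma ncond_pos: "0 < ncond"
proof -
  have "sv 0 < sv ncond" unfolding sv_0 sv_ncond by (rule cond_exp_pos)
  then show ?thesis by simp
qed

lemma conductor_subset_nonunits: "conductor \<subseteq> nonunits R"
  using conductor_subset_Rfilt[of 1] ncond_pos unfolding Rfilt_1 by simp

abbreviation colon_filt where "colon_filt i \<equiv> colon R (Rfilt R v i)"

lemma colon_filt_mono: "i \<le> j \<Longrightarrow> colon_filt i \<subseteq> colon_filt j"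
  using colon_anti_mono Rfilt_anti_mono by blast

lemma R_subset_colon_filt: "R \<subseteq> colon_filt i"
  using subset_colon[OF subring Rfilt_subset] .

lemma colon_filt_subset_Rbar: "i \<le> ncond \<Longrightarrow> colon_filt i \<subseteq> Rbar"
  using colon_anti_mono[OF conductor_subset_Rfilt] colon_conductor by blast

lemma above_conductor_colon_filt: "i \<le> ncond \<Longrightarrow> above_conductor (colon_filt i)"
  unfolding above_conductor_def using submodule_colon[OF subring] R_subset_colon_filt
    conductor_subset_R colon_filt_subset_Rbar by blast

lemma colon_filt_0: "colon_filt 0 = R"
  unfolding Rfilt_0 using colon_self[OF subring] .

lemma colon_filt_ncond: "colon_filt ncond = Rbar"
  unfolding Rfilt_ncond colon_conductor ..

lemma rfilt_eq_card:
  assumes "1 \<le> i" "i \<le> ncond"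
  shows "rfilt R v i = card (vals (colon_filt i) - vals (colon_filt (i - 1)))"
  unfolding rfilt_def using assms
  by (intro rlength_eq_card_vals above_conductor_colon_filt submodule_colon[OF subring]
      colon_filt_mono colon_filt_subset_Rbar) simp_all

lemma delta_eq: "rlength R Rbar R = c - ncond"
  using rlength_eq_card_vals[OF above_conductor_R submodule_Rbar R_subset_Rbar]
  by (simp add: vals_val_ring card_gaps flip: value_set_eq)

lemma colon_nonunits_subset_Rbar: "colon R (nonunits R) \<subseteq> Rbar"
  using colon_anti_mono[OF conductor_subset_nonunits] colon_conductor by blast

abbreviation r where "r \<equiv> rlength R (colon R (nonunits R)) R"

lemma r_eq_card: "r = card (vals (colon R (nonunits R)) - S)"
  using rlength_eq_card_vals[OF above_conductor_R submodule_colon[OF subring]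
      subset_colon[OF subring nonunits_subset] colon_nonunits_subset_Rbar] value_set_eq by simp

lemma finite_vals_colon_filt_diff: "finite (vals (colon_filt j) - vals (colon_filt i))"
  using finite_vals_diff[of "colon_filt i"] R_subset_colon_filt conductor_subset_R by blast

lemma sum_rfilt:
  assumes "a \<le> b" "b \<le> ncond"
  shows "(\<Sum>i\<in>{a<..b}. rfilt R v i) = card (vals (colon_filt b) - vals (colon_filt a))"
proof -
  have "(\<Sum>i\<in>{a<..b}. rfilt R v i) = (\<Sum>i\<in>{a<..b}. card (vals (colon_filt i) - vals (colon_filt (i - 1))))"
    using assms by (intro sum.cong) (simp_all add: rfilt_eq_card)
  also have "\<dots> = card (vals (colon_filt b) - vals (colon_filt a))"
    using assms(1) by (rule sum_card_diff_telescope[rotated 2])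
      (simp_all add: vals_mono colon_filt_mono finite_vals_colon_filt_diff)
  finally show ?thesis .
qed

lemma mult_mem_R_of_val_ge:
  assumes "z \<noteq> 0" "a \<noteq> 0" "int c \<le> v z + v a"
  shows "z * a \<in> R"
proof -
  have "z * a \<in> conductor" using assms val_mult[OF assms(1,2)] unfolding val_ge_def by simp
  then show ?thesis using conductor_subset_R by blast
qed

lemma value_set_elem_Rfilt:
  obtains y where "y \<in> Rfilt R v i" "y \<noteq> 0" "v y = int (sv i)"
proof -
  obtain y where "y \<in> R" "y \<noteq> 0" "v y = int (sv i)" using sv_mem by (rule value_setE)
  then show ?thesis using that unfolding Rfilt_eq val_ge_def by simp
qed

text \<open>An element of value c - 1 - s_i lies in R:R_(i+1) but not in R:R_i.\<close>
lemma rfilt_pos: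
  assumes "Suc i \<le> ncond"
  shows "1 \<le> rfilt R v (Suc i)"
proof -
  obtain z where z: "z \<noteq> 0" "v z = int c - 1 - int (sv i)" by (rule val_surj)
  have "z * a \<in> R" if "a \<in> Rfilt R v (Suc i)" for a
  proof (cases "a = 0")
    case False
    then have "int (sv (Suc i)) \<le> v a" using that unfolding Rfilt_eq val_ge_def by simp
    moreover have "int (sv i) < int (sv (Suc i))" by simp
    ultimately have "int c \<le> v z + v a" using z(2) by linarith
    then show ?thesis using mult_mem_R_of_val_ge[OF z(1) False] by simp
  qed (simp add: R_0)
  then have zQ: "z \<in> colon_filt (Suc i)" unfolding colon_def by blast
  obtain y where y: "y \<in> Rfilt R v i" "y \<noteq> 0" "v y = int (sv i)" by (rule value_set_elem_Rfilt)
  have "v (z * y) = int c - 1" using val_mult[OF z(1) y(2)] z(2) y(3) by simp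
  then have "z * y \<notin> R" using not_mem_R_of_val_pred_cond_exp z(1) y(2) by simp
  then have "z \<notin> colon_filt i" using y(1) unfolding colon_def by blast
  then have "colon_filt i \<subset> colon_filt (Suc i)" using zQ colon_filt_mono[of i "Suc i"] by auto
  then have "vals (colon_filt i) \<subset> vals (colon_filt (Suc i))"
    using vals_psubset above_conductor_colon_filt submodule_colon[OF subring] colon_filt_subset_Rbar assms
    by simp
  then have "vals (colon_filt (Suc i)) - vals (colon_filt i) \<noteq> {}" by blast
  then show ?thesis
    using rfilt_eq_card[of "Suc i"] assms finite_vals_colon_filt_diff by (simp add: Suc_le_eq card_gt_0_iff)
qed

lemma Rfilt_decomp:
  assumes y: "y \<in> R" "y \<noteq> 0" "v y = int (sv i)" and b: "b \<in> Rfilt R v i"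
  obtains b' l where "b' \<in> Rfilt R v (Suc i)" "l \<in> R" "b = b' + l * y"
proof (cases "b \<in> Rfilt R v (Suc i)")
  case True
  then show ?thesis using that[of b 0] R_0 by simp
next
  case False
  have bR: "b \<in> R" "b \<noteq> 0" "int (sv i) \<le> v b" using b False R_0 unfolding Rfilt_eq val_ge_def by auto
  have "\<not> int (sv i) < v b" using mem_Rfilt_Suc[OF bR(1,2)] False by blast
  then have "v y = v b" using bR(3) y(3) by simp
  then obtain l where l: "l \<in> R" "b - l * y = 0 \<or> v b < v (b - l * y)"
    using residual_lift[OF bR(2) y(2)] by blast
  have "b - l * y \<in> R" using R_diff R_mult bR(1) l(1) y(1) by blast
  then have "b - l * y \<in> Rfilt R v (Suc i)"
    using l(2) mem_Rfilt_Suc[of "b - l * y"] bR(3) R_0 Rfilt_eq val_ge_def by fastforce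
  then show ?thesis using that l(1) by simp
qed

lemma colon_filt_of_mult_mem:
  assumes y: "y \<in> R" "y \<noteq> 0" "v y = int (sv i)"
    and d: "d \<in> colon_filt (Suc i)" "d * y \<in> R"
  shows "d \<in> colon_filt i"
  unfolding colon_def
proof (intro CollectI ballI)
  fix b assume "b \<in> Rfilt R v i"
  then obtain b' l where bl: "b' \<in> Rfilt R v (Suc i)" "l \<in> R" "b = b' + l * y"
    using Rfilt_decomp[OF y] by blast
  have "d * b' \<in> R" using d(1) bl(1) unfolding colon_def by blast
  moreover have "d * b = d * b' + l * (d * y)" unfolding bl(3) by (simp add: algebra_simps)
  ultimately show "d * b \<in> R" using R_add R_mult bl(2) d(2) by simp
qed

lemma mult_colon_filt_subset:
  assumes y: "y \<in> R" "y \<noteq> 0" "v y = int (sv i)" and z: "z \<in> colon_filt (Suc i)"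
  shows "y * z \<in> colon R (nonunits R)"
  unfolding colon_def
proof (intro CollectI ballI)
  fix \<mu> assume "\<mu> \<in> nonunits R"
  then have \<mu>: "\<mu> \<in> R" "\<mu> = 0 \<or> 0 < v \<mu>" unfolding nonunits_eq by auto
  have "y * \<mu> \<in> Rfilt R v (Suc i)"
  proof (cases "\<mu> = 0")
    case False
    then show ?thesis using mem_Rfilt_Suc[of "y * \<mu>"] R_mult[OF y(1) \<mu>(1)] val_mult[OF y(2) False] y(2,3) \<mu>(2)
      by simp
  qed (simp add: Rfilt_eq R_0 val_ge_def)
  then have "z * (y * \<mu>) \<in> R" using z unfolding colon_def by blast
  then show "y * z * \<mu> \<in> R" by (simp add: ac_simps)
qed

lemma mult_colon_filt_add_R:
  assumes "y \<in> Rfilt R v i"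
  shows "y *o colon_filt i + R = R"
proof
  show "y *o colon_filt i + R \<subseteq> R"
  proof
    fix w assume "w \<in> y *o colon_filt i + R"
    then obtain z a where w: "w = y * z + a" "z \<in> colon_filt i" "a \<in> R"
      unfolding elt_set_times_def by (auto elim!: set_plus_elim)
    then have "z * y \<in> R" using assms unfolding colon_def by blast
    then show "w \<in> R" using w(1,3) R_add by (simp add: mult.commute)
  qed
  show "R \<subseteq> y *o colon_filt i + R"
  proof
    fix a assume "a \<in> R"
    have "y * 0 \<in> y *o colon_filt i"
      using submodule_zero[OF submodule_colon[OF subring]] by (rule set_times_intro2)
    from set_plus_intro[OF this \<open>a \<in> R\<close>] show "a \<in> y *o colon_filt i + R" by simp
  qed
qed

lemma mult_colon_filt_Suc_add_R_subset:
  assumes y: "y \<in> R" "y \<noteq> 0" "v y = int (sv i)"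
  shows "y *o colon_filt (Suc i) + R \<subseteq> colon R (nonunits R)"
proof
  fix w assume "w \<in> y *o colon_filt (Suc i) + R"
  then obtain z a where w: "w = y * z + a" "z \<in> colon_filt (Suc i)" "a \<in> R"
    unfolding elt_set_times_def by (auto elim!: set_plus_elim)
  have "y * z \<in> colon R (nonunits R)" using mult_colon_filt_subset[OF y w(2)] .
  moreover have "a \<in> colon R (nonunits R)" using w(3) subset_colon[OF subring nonunits_subset] by blast
  ultimately show "w \<in> colon R (nonunits R)"
    unfolding w(1) using submodule_add[OF submodule_colon[OF subring]] by blast
qed

lemma mult_add_R_psubset:
  assumes y: "y \<in> R" "y \<noteq> 0" "v y = int (sv i)"
    and X: "submodule R X" "colon_filt i \<subseteq> X" "X \<subset> X'" "X' \<subseteq> colon_filt (Suc i)"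
  shows "y *o X + R \<subset> y *o X' + R"
proof -
  obtain z where z: "z \<in> X'" "z \<notin> X" using X(3) by blast
  have "y *o X + R \<subseteq> y *o X' + R" using X(3) by (intro set_plus_mono2 set_times_mono) auto
  moreover have "y * z \<in> y *o X' + R"
    using set_plus_intro[OF set_times_intro2[OF z(1)] R_0, of y] by simp
  moreover have "y * z \<notin> y *o X + R"
  proof
    assume "y * z \<in> y *o X + R"
    then obtain w a where wa: "y * z = y * w + a" "w \<in> X" "a \<in> R"
      unfolding elt_set_times_def by (auto elim!: set_plus_elim)
    have "z \<in> colon_filt (Suc i)" "w \<in> colon_filt (Suc i)" using X(3,4) z(1) wa(2) by auto
    then have "z - w \<in> colon_filt (Suc i)" by (rule submodule_diff[OF submodule_colon[OF subring]])
    moreover have "(z - w) * y = a" using wa(1) by (simp add: algebra_simps)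
    ultimately have "z - w \<in> X" using colon_filt_of_mult_mem[OF y] wa(3) X(2) by auto
    then have "(z - w) + w \<in> X" using submodule_add[OF X(1)] wa(2) by blast
    then show False using z(2) by simp
  qed
  ultimately show ?thesis by blast
qed

text \<open>Multiplying by an element y of value s_i and adding R turns a composition series
  from R:R_i to R:R_(i+1) into a strict chain from R into R:m.\<close>
lemma rfilt_le_r:
  assumes "Suc i \<le> ncond"
  shows "rfilt R v (Suc i) \<le> r"
proof -
  obtain y where y: "y \<in> Rfilt R v i" "y \<noteq> 0" "v y = int (sv i)" by (rule value_set_elem_Rfilt)
  have yR: "y \<in> R" using y(1) Rfilt_subset by blast
  define m where "m = rfilt R v (Suc i)"
  have "m = card (vals (colon_filt (Suc i)) - vals (colon_filt i))"
    using rfilt_eq_card[of "Suc i"] assms unfolding m_def by simp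
  then obtain f where f: "f 0 = colon_filt i" "f m = colon_filt (Suc i)" "submodule_chain R f m"
    using exists_chain_card_vals[OF above_conductor_colon_filt submodule_colon[OF subring]
        colon_filt_mono colon_filt_subset_Rbar, of i "Suc i"] assms by auto
  have f_between: "colon_filt i \<subseteq> f j" "f j \<subseteq> colon_filt (Suc i)" if "j \<le> m" for j
    using submodule_chain_mono[OF f(3), of 0 j] submodule_chain_mono[OF f(3), of j m] f(1,2) that by auto
  define g where "g j = y *o f j + R" for j
  have "submodule_chain R g m"
    unfolding submodule_chain_def
  proof (intro conjI allI impI)
    fix j assume "j \<le> m"
    then show "submodule R (g j)" using f(3) unfolding g_def submodule_chain_def
      by (intro submodule_set_plus submodule_elt_set_times submodule_R) simp
  next
    fix j assume "j < m"
    then show "g j \<subset> g (Suc j)" using f(3) f_between unfolding g_def submodule_chain_def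
      by (intro mult_add_R_psubset[OF yR y(2,3)]) auto
  qed
  moreover have "g 0 = R" unfolding g_def f(1) using y(1) by (rule mult_colon_filt_add_R)
  moreover have g_m: "g m \<subseteq> colon R (nonunits R)"
    unfolding g_def f(2) using yR y(2,3) by (rule mult_colon_filt_Suc_add_R_subset)
  moreover from this have "g m \<subseteq> Rbar" using colon_nonunits_subset_Rbar by (rule order_trans)
  ultimately have "m \<le> card (vals (g m) - vals R)"
    using chain_length_le_card_vals[OF above_conductor_R, of "g m" g m] by simp
  also have "\<dots> \<le> card (vals (colon R (nonunits R)) - vals R)"
    using finite_vals_diff[OF conductor_subset_R] vals_mono[OF g_m] by (intro card_mono) auto
  also have "\<dots> = r" using r_eq_card value_set_eq by simp
  finally show ?thesis unfolding m_def .
qed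

lemma mem_vals_colon:
  assumes X: "\<And>a. a \<in> X \<Longrightarrow> a \<noteq> 0 \<Longrightarrow> int T \<le> v a" and g: "c \<le> g + T"
  shows "g \<in> vals (colon R X)"
proof (rule val_surj[of "int g"])
  fix z assume z: "z \<noteq> 0" "v z = int g"
  have "z * a \<in> R" if "a \<in> X" for a
  proof (cases "a = 0")
    case False
    then show ?thesis using mult_mem_R_of_val_ge[OF z(1) False] X[OF that False] z(2) g by simp
  qed (simp add: R_0)
  then have "z \<in> colon R X" unfolding colon_def by blast
  then show ?thesis using z by (rule mem_valsI)
qed

definition apery_below_cond where
  "apery_below_cond = {s \<in> S. s < c \<and> \<not> (e \<le> s \<and> s - e \<in> S)}"

lemma above_conductor_conductor_add_mult:
  assumes "x \<in> R"
  shows "conductor \<subseteq> conductor + x *o R" "conductor + x *o R \<subseteq> R"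
    "submodule R (conductor + x *o R)"
proof -
  show "conductor \<subseteq> conductor + x *o R"
  proof
    fix u assume "u \<in> conductor"
    from set_plus_intro[OF this set_times_intro2[OF R_0]] show "u \<in> conductor + x *o R" by simp
  qed
  show "conductor + x *o R \<subseteq> R"
    unfolding elt_set_times_def using conductor_subset_R R_add R_mult[OF assms]
    by (auto elim!: set_plus_elim)
  show "submodule R (conductor + x *o R)"
    by (intro submodule_set_plus submodule_val_ge submodule_elt_set_times submodule_R)
qed

text \<open>Below c the conductor contributes no values.\<close>
lemma mem_vals_conductor_add_mult:
  assumes x: "x \<in> R" "x \<noteq> 0" "v x = int e" and s: "s \<in> vals (conductor + x *o R)" "s < c"
  shows "e \<le> s" "s - e \<in> S"
proof -
  obtain w where w: "w \<in> conductor + x *o R" "w \<noteq> 0" "v w = int s"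
    using s(1) above_conductor_conductor_add_mult(2)[OF x(1)] R_subset_Rbar by (blast elim: mem_valsE)
  then obtain u a where ua: "w = u + x * a" "u \<in> conductor" "a \<in> R"
    unfolding elt_set_times_def by (auto elim!: set_plus_elim)
  have "x * a \<noteq> 0 \<and> v (x * a) = v w"
  proof (cases "u = 0")
    case False
    then have "v w < v u" using ua(2) w(3) s(2) unfolding val_ge_def by simp
    then show ?thesis using val_diff_eq_left[OF w(2) False] ua(1) by simp
  qed (use ua(1) w in simp)
  then have a: "a \<noteq> 0" "v w = int e + v a" using val_mult[OF x(2)] x(3) by auto
  then show es: "e \<le> s" using w(3) val_nonneg[OF ua(3)] by linarith
  have "v a = int (s - e)" using a(2) w(3) es by (simp add: of_nat_diff)
  then have "nat (v a) = s - e" by (simp only: nat_int)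
  then show "s - e \<in> S" using nat_val_mem_value_set[OF ua(3) a(1)] by simp
qed

lemma vals_conductor_add_mult:
  assumes x: "x \<in> R" "x \<noteq> 0" "v x = int e"
  shows "vals R - vals (conductor + x *o R) = apery_below_cond"
proof (rule set_eqI)
  fix s
  show "s \<in> vals R - vals (conductor + x *o R) \<longleftrightarrow> s \<in> apery_below_cond"
  proof
    assume s: "s \<in> vals R - vals (conductor + x *o R)"
    have "s < c" using s mem_vals_of_ge[OF above_conductor_conductor_add_mult(1)[OF x(1)]]
      by (meson DiffD2 not_le)
    moreover have "\<not> (e \<le> s \<and> s - e \<in> S)"
    proof
      assume es: "e \<le> s \<and> s - e \<in> S"
      then obtain a where a: "a \<in> R" "a \<noteq> 0" "v a = int (s - e)" by (blast elim: value_setE)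
      have "0 + x * a \<in> conductor + x *o R"
        using submodule_zero[OF submodule_val_ge] a(1) by (intro set_plus_intro set_times_intro2)
      moreover have "v (x * a) = int s" using val_mult[OF x(2) a(2)] x(3) a(3) es by simp
      ultimately have "s \<in> vals (conductor + x *o R)" using mem_valsI x(2) a(2) by simp
      then show False using s by simp
    qed
    ultimately show "s \<in> apery_below_cond" using s value_set_eq unfolding apery_below_cond_def by simp
  next
    assume "s \<in> apery_below_cond"
    then show "s \<in> vals R - vals (conductor + x *o R)"
      using mem_vals_conductor_add_mult[OF x, of s] value_set_eq unfolding apery_below_cond_def by auto
  qed
qed

lemma rlength_mult_e:
  assumes x: "x \<in> R" "x \<noteq> 0" "v x = int e"
  shows "rlength R R {u + x * a | u a. u \<in> colon R Rbar \<and> a \<in> R} = card apery_below_cond"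
proof -
  have "{u + x * a | u a. u \<in> colon R Rbar \<and> a \<in> R} = conductor + x *o R"
    unfolding colon_Rbar set_plus_def elt_set_times_def by blast
  moreover have "above_conductor (conductor + x *o R)"
    using above_conductor_conductor_add_mult[OF x(1)] R_subset_Rbar unfolding above_conductor_def by blast
  ultimately show ?thesis
    using rlength_eq_card_vals[OF _ submodule_R _ R_subset_Rbar] above_conductor_conductor_add_mult(2)[OF x(1)]
      vals_conductor_add_mult[OF x] by simp
qed

lemma card_apery_below_cond: "card apery_below_cond = ncond - card {t \<in> S. t < c - e}"
proof -
  define W where "W = {s \<in> S. s < c \<and> e \<le> s \<and> s - e \<in> S}"
  have "{y \<in> S. y < c} = apery_below_cond \<union> W" "apery_below_cond \<inter> W = {}"
    unfolding apery_below_cond_def W_def by blast+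
  moreover have "finite apery_below_cond" "finite W"
    unfolding apery_below_cond_def W_def by (auto intro: finite_subset[of _ "{..<c}"])
  ultimately have "ncond = card apery_below_cond + card W" unfolding ncond_def by (simp add: card_Un_disjoint)
  moreover have "W = (\<lambda>t. t + e) ` {t \<in> S. t < c - e}"
  proof (rule set_eqI)
    fix s
    show "s \<in> W \<longleftrightarrow> s \<in> (\<lambda>t. t + e) ` {t \<in> S. t < c - e}"
    proof
      assume "s \<in> W"
      then have "s = (s - e) + e" "s - e \<in> {t \<in> S. t < c - e}" unfolding W_def by auto
      then show "s \<in> (\<lambda>t. t + e) ` {t \<in> S. t < c - e}" by (rule image_eqI)
    qed (use value_set_add mult_e_mem mult_e_le_cond_exp in \<open>auto simp: W_def\<close>)
  qed
  then have "card W = card {t \<in> S. t < c - e}" by (simp add: card_image)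
  ultimately show ?thesis by simp
qed

lemma le_sv_threshold:
  assumes "sv j = (LEAST y. y \<in> S \<and> int c - int e \<le> int y)"
  shows "c - e \<le> sv j" and "card {t \<in> S. t < c - e} = j"
proof -
  let ?P = "\<lambda>y. y \<in> S \<and> int c - int e \<le> int y"
  have "?P c" using cond_exp_mem by simp
  then have "?P (sv j)" unfolding assms by (rule LeastI)
  then show le: "c - e \<le> sv j" by linarith
  have "{t \<in> S. t < c - e} = {t \<in> S. t < sv j}"
  proof (rule Collect_cong)
    fix t
    have "t \<in> S \<Longrightarrow> t < sv j \<Longrightarrow> t < c - e"
      using Least_le[of ?P t] mult_e_le_cond_exp unfolding assms[symmetric] by linarith
    then show "t \<in> S \<and> t < c - e \<longleftrightarrow> t \<in> S \<and> t < sv j" using le by auto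
  qed
  then show "card {t \<in> S. t < c - e} = j" using card_less_sv by simp
qed

text \<open>R:R_j contains every element of value at least e, so it misses at most the values
  1, ..., e - 1.\<close>
lemma sum_rfilt_above_threshold:
  assumes j: "sv j = (LEAST y. y \<in> S \<and> int c - int e \<le> int y)" "j \<le> ncond"
  shows "(\<Sum>i\<in>{j<..ncond}. rfilt R v i) \<le> e - 1"
proof -
  have "UNIV - vals (colon_filt j) \<subseteq> {1..<e}"
  proof
    fix g assume g: "g \<in> UNIV - vals (colon_filt j)"
    have "0 \<in> vals (colon_filt j)"
      using mem_valsI[OF R_subset_colon_filt[THEN subsetD, OF R_1]] by simp
    moreover have "int (sv j) \<le> v a" if "a \<in> Rfilt R v j" "a \<noteq> 0" for a
      using that unfolding Rfilt_eq val_ge_def by simp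
    then have "g \<in> vals (colon_filt j)" if "e \<le> g"
      using mem_vals_colon[of "Rfilt R v j" "sv j" g] le_sv_threshold(1)[OF j(1)] that by simp
    ultimately have "g \<noteq> 0" "\<not> e \<le> g" using g by (metis DiffD2)+
    then show "g \<in> {1..<e}" by simp
  qed
  then have "card (UNIV - vals (colon_filt j)) \<le> e - 1" using card_mono[of "{1..<e}"] by fastforce
  then show ?thesis using sum_rfilt[OF j(2) order_refl] by (simp add: colon_filt_ncond vals_val_ring)
qed

text \<open>Every gap of v(R) in [c - e, c) is a value of R:m.\<close>
lemma mult_e_le_r_plus: "e \<le> r + (ncond - card {t \<in> S. t < c - e})"
proof -
  define G where "G = {c - e..<c} - S"
  define H where "H = {s \<in> S. c - e \<le> s \<and> s < c}"
  have "int e \<le> v a" if "a \<in> nonunits R" "a \<noteq> 0" for a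
    using that val_ge_mult_e unfolding nonunits_eq by auto
  then have "G \<subseteq> vals (colon R (nonunits R)) - S"
    using mem_vals_colon[of "nonunits R" e] unfolding G_def by auto
  then have "card G \<le> r"
    unfolding r_eq_card using finite_vals_diff[OF conductor_subset_R] value_set_eq
    by (intro card_mono) auto
  moreover have "e = card G + card H"
  proof -
    have "{c - e..<c} = G \<union> H" "G \<inter> H = {}" unfolding G_def H_def by auto
    moreover have "finite G" "finite H" unfolding G_def H_def by (auto intro: finite_subset[of _ "{..<c}"])
    ultimately have "card {c - e..<c} = card G + card H" by (simp add: card_Un_disjoint)
    then show ?thesis using mult_e_le_cond_exp by simp
  qed
  moreover have "ncond = card {t \<in> S. t < c - e} + card H"
  proof -
    have "{y \<in> S. y < c} = {t \<in> S. t < c - e} \<union> H" "{t \<in> S. t < c - e} \<inter> H = {}"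
      unfolding H_def by auto
    then show ?thesis unfolding ncond_def by (simp add: card_Un_disjoint H_def)
  qed
  ultimately show ?thesis by linarith
qed

end

section \<open>Integer arithmetic\<close>

text \<open>SA and SB stand for the sums of r - r_i over A and of r_i over B, so that
  b = SA + k r - SB.\<close>

lemma excess_identity:
  fixes b r e k SA SB :: int
  assumes "b = SA + k * r - SB"
  shows "b = (e - r - 1) * (r - 1) + SA + (k - (e - r)) * r + (e - 1 - SB)"
  using assms by (simp add: algebra_simps)

lemma r_lower_bound:
  fixes b q r e k SA SB :: int
  assumes "b = SA + k * r - SB" "0 \<le> SA" "SB \<le> e - 1" "e \<le> r + k" "2 \<le> r" "b \<le> q * (r - 1)"
  shows "e - q - 1 \<le> r"
proof -
  have "0 \<le> (k - (e - r)) * r" using assms(4,5) by simp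
  then have "(e - r - 1) * (r - 1) \<le> q * (r - 1)"
    using excess_identity[OF assms(1), of e] assms(2,3,6) by linarith
  then show ?thesis using assms(5) by (simp add: mult_le_cancel_right)
qed

lemma r_lower_bound_eq:
  fixes b q r e k SA SB :: int
  assumes "b = SA + k * r - SB" "0 \<le> SA" "SB \<le> e - 1" "e \<le> r + k" "2 \<le> r" "b \<le> q * (r - 1)"
    and "r = e - 1 - q"
  shows "b = q * (r - 1)" "q \<le> e - 3" "e - r = k" "SB = e - 1" "SA = 0"
    "b = (e - r - 1) * (r - 1)" "b = (k - 1) * (r - 1)"
proof -
  have "0 \<le> (k - (e - r)) * r" using assms(4,5) by simp
  moreover have "q * (r - 1) = (e - r - 1) * (r - 1)" using assms(7) by simp
  ultimately have "SA = 0" "(k - (e - r)) * r = 0" "SB = e - 1" "b = q * (r - 1)"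
    using excess_identity[OF assms(1), of e] assms(2,3,6) by linarith+
  moreover from this(2) have "k = e - r" using assms(5) by simp
  ultimately show "b = q * (r - 1)" "q \<le> e - 3" "e - r = k" "SB = e - 1" "SA = 0"
    "b = (e - r - 1) * (r - 1)" "b = (k - 1) * (r - 1)"
    using assms(5,7) by simp_all
qed

lemma k_bounds:
  fixes b q r e k SA SB :: int
  assumes "b = SA + k * r - SB" "0 \<le> SA" "SB \<le> e - 1" "e \<le> r + k" "2 \<le> r" "b \<le> q * (r - 1)"
    and "e - q \<le> r"
  shows "e - r \<le> k" "k \<le> q"
proof -
  have "(k - q) * r \<le> e - 1 - q" using assms(1-3,6) by (simp add: algebra_simps)
  then have "(k - q) * r < 1 * r" using assms(7) by simp
  then show "k \<le> q" using assms(5) by (simp add: mult_less_cancel_right)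
  show "e - r \<le> k" using assms(4) by simp
qed

lemma sum_A_bounds:
  fixes b q r e k n SA SB :: int
  assumes "b = SA + k * r - SB" "0 \<le> SA" "k \<le> SB" "SB \<le> e - 1" "e \<le> r + k" "2 \<le> r"
    and "b \<le> (n - 1) * (r - 1)" "b \<le> q * (r - 1)" "(q - 1) * (r - 1) < b"
  shows "k - 1 \<le> q" "q \<le> n - 1" "(q - k - 1) * (r - 1) < SA" "SA \<le> (q - k) * (r - 1) + e - 1 - k"
proof -
  have "(k - 1) * (r - 1) \<le> q * (r - 1)" using assms(1,2,4,5,8) by (simp add: algebra_simps)
  then show "k - 1 \<le> q" using assms(6) by (simp add: mult_le_cancel_right)
  have "(q - 1) * (r - 1) < (n - 1) * (r - 1)" using assms(7,9) by linarith
  then show "q \<le> n - 1" using assms(6) by (simp add: mult_less_cancel_right)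
  show "(q - k - 1) * (r - 1) < SA" "SA \<le> (q - k) * (r - 1) + e - 1 - k"
    using assms(1,3,4,8,9) by (simp_all add: algebra_simps)
qed

context singular_branch
begin

lemma rfilt_bounds:
  assumes "i \<in> {1..ncond}"
  shows "1 \<le> rfilt R v i" "rfilt R v i \<le> r"
  using rfilt_pos[of "i - 1"] rfilt_le_r[of "i - 1"] assms by simp_all

lemma rfilt_1: "rfilt R v 1 = r"
  unfolding rfilt_def diff_self_eq_0 Rfilt_1 Rfilt_0 colon_self[OF subring] ..

lemma sum_rfilt_eq_delta: "(\<Sum>i\<in>{1..ncond}. rfilt R v i) = rlength R Rbar R"
proof -
  have "{0<..ncond} = {1..ncond}" by auto
  then show ?thesis
    using sum_rfilt[of 0 ncond] card_gaps delta_eq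
    by (simp add: colon_filt_0 colon_filt_ncond vals_val_ring flip: value_set_eq)
qed

text \<open>The invariant b = n r - \<delta> of the paper.\<close>
abbreviation excess where "excess \<equiv> int ncond * int r - int (rlength R Rbar R)"

lemma excess_eq_sum:
  "excess = (\<Sum>i\<in>{1..ncond}. int r - int (rfilt R v i))"
  using sum_rfilt_eq_delta by (simp add: sum_subtractf flip: of_nat_sum)

lemma sum_r_minus_rfilt_nonneg:
  "A \<subseteq> {1..ncond} \<Longrightarrow> 0 \<le> (\<Sum>i\<in>A. int r - int (rfilt R v i))"
  using rfilt_bounds(2) by (intro sum_nonneg) force

lemma sum_r_minus_rfilt_eq_0:
  assumes "A \<subseteq> {1..ncond}" "(\<Sum>i\<in>A. int r - int (rfilt R v i)) = 0"
  shows "\<forall>i\<in>A. int (rfilt R v i) = int r"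
  using assms rfilt_bounds(2) finite_subset[OF assms(1)]
  by (subst (asm) sum_nonneg_eq_0_iff) force+

lemma excess_le: "excess \<le> (int ncond - 1) * (int r - 1)"
proof -
  have "{1..ncond} = insert 1 {2..ncond}" using ncond_pos by auto
  then have "(\<Sum>i\<in>{1..ncond}. int r - int (rfilt R v i)) = (\<Sum>i\<in>{2..ncond}. int r - int (rfilt R v i))"
    using rfilt_1 by simp
  also have "\<dots> \<le> (\<Sum>i\<in>{2..ncond}. int r - 1)"
  proof (rule sum_mono)
    fix i assume "i \<in> {2..ncond}"
    then have "1 \<le> rfilt R v i" using rfilt_bounds(1)[of i] by simp
    then show "int r - int (rfilt R v i) \<le> int r - 1" by simp
  qed
  finally show ?thesis using excess_eq_sum ncond_pos by (simp add: of_nat_diff)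
qed

lemma two_le_r_of_excess_pos:
  assumes "0 < excess"
  shows "2 \<le> r"
proof (rule ccontr)
  assume "\<not> 2 \<le> r"
  then have "(\<Sum>i\<in>{1..ncond}. int r - int (rfilt R v i)) \<le> 0"
    using rfilt_bounds(1) by (intro sum_nonpos) force
  then show False using assms excess_eq_sum by simp
qed

lemma excess_decomposition:
  assumes i0: "1 \<le> i0" "i0 \<le> ncond"
    and threshold: "sv (i0 - 1) = (LEAST y. y \<in> S \<and> int c - int e \<le> int y)"
    and x: "x \<in> R" "x \<noteq> 0" "v x = int e"
  defines "k \<equiv> int (rlength R R {u + x * a | u a. u \<in> colon R Rbar \<and> a \<in> R})"
    and "SA \<equiv> \<Sum>i\<in>{1..ncond} - {i0..ncond}. int r - int (rfilt R v i)"
    and "SB \<equiv> \<Sum>i\<in>{i0..ncond}. int (rfilt R v i)"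
  shows "excess = SA + k * int r - SB"
    and "k \<le> SB" "SB \<le> int e - 1" "int e \<le> int r + k"
proof -
  have k: "k = int (card {i0..ncond})"
    unfolding k_def rlength_mult_e[OF x] card_apery_below_cond le_sv_threshold(2)[OF threshold]
    using i0 by simp
  have "(\<Sum>i\<in>{1..ncond}. int r - int (rfilt R v i))
      = SA + (\<Sum>i\<in>{i0..ncond}. int r - int (rfilt R v i))"
    unfolding SA_def using i0 by (subst sum.subset_diff[of "{i0..ncond}"]) auto
  then show "excess = SA + k * int r - SB"
    unfolding excess_eq_sum SB_def k by (simp add: sum_subtractf)
  have "(\<Sum>i\<in>{i0..ncond}. 1) \<le> SB"
    unfolding SB_def using rfilt_bounds(1) i0 by (intro sum_mono) force
  then show "k \<le> SB" using k by simp
  have "{i0 - 1<..ncond} = {i0..ncond}" using i0 by auto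
  then have "(\<Sum>i\<in>{i0..ncond}. rfilt R v i) \<le> e - 1"
    using sum_rfilt_above_threshold[OF threshold] i0 by simp
  then show "SB \<le> int e - 1" using mult_e_pos unfolding SB_def by (simp add: of_nat_diff flip: of_nat_sum)
  show "int e \<le> int r + k"
    using mult_e_le_r_plus le_sv_threshold(2)[OF threshold] i0 k by simp
qed

end

theorem proposition2p5:
  fixes R :: "'a::field set" and v :: "'a \<Rightarrow> int" and q :: nat and i0 :: nat and x :: 'a
  assumes sub: "subring R"
    and qf: "quotient_field_of R"
    and noeth: "noetherian R"
    and loc: "local_ring R"
    and dim1: "dim_one R"
    and not_reg: "\<not> regular_dim1 R"
    and dv: "discrete_valuation v"
    and ic: "integral_closure R = val_ring v"
    and fin: "\<exists>G. finite G \<and> G \<subseteq> val_ring v \<and> val_ring v = rspan R G"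
    and rr: "residually_rational R v"
  defines "c \<equiv> int (cond_exp R v)"
    and "\<delta> \<equiv> int (rlength R (val_ring v) R)"
    and "r \<equiv> int (rlength R (colon R (nonunits R)) R)"
    and "e \<equiv> int (mult_e R v)"
    and "n \<equiv> int (cond_exp R v) - int (rlength R (val_ring v) R)"
    and "b \<equiv> (int (cond_exp R v) - int (rlength R (val_ring v) R))
                * int (rlength R (colon R (nonunits R)) R) - int (rlength R (val_ring v) R)"
    and "B \<equiv> {i0 .. nat (int (cond_exp R v) - int (rlength R (val_ring v) R))}"
    and "A \<equiv> {1 .. nat (int (cond_exp R v) - int (rlength R (val_ring v) R))}
                - {i0 .. nat (int (cond_exp R v) - int (rlength R (val_ring v) R))}"
    and "k \<equiv> int (rlength R R ({u + x * a | u a. u \<in> colon R (val_ring v) \<and> a \<in> R}))"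
  assumes i0: "1 \<le> int i0" "int i0 \<le> n"
    and i0def: "sval R v (i0 - 1) = (LEAST y. y \<in> value_set R v \<and> int y \<ge> c - e)"
    and xm: "x \<in> nonunits R" and xv: "x \<noteq> 0" "v x = e"
    and bpos: "0 < b" and bq: "b \<le> int q * (r - 1)"
  shows
   "r \<ge> e - int q - 1
    \<and> (r = e - 1 - int q \<longrightarrow>
         b = int q * (r - 1) \<and> int q \<le> e - 3 \<and> e - r = k
         \<and> (\<Sum>i\<in>B. int (rfilt R v i)) = e - 1 \<and> (\<forall>i\<in>A. int (rfilt R v i) = r)
         \<and> b = (e - r - 1) * (r - 1) \<and> b = (k - 1) * (r - 1))
    \<and> (r \<ge> e - int q \<longrightarrow> e - r \<le> k \<and> k \<le> int q)
    \<and> ((int q - 1) * (r - 1) < b \<longrightarrow>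
         k - 1 \<le> int q \<and> int q \<le> n - 1
         \<and> (int q - k - 1) * (r - 1) < (\<Sum>i\<in>A. r - int (rfilt R v i))
         \<and> (\<Sum>i\<in>A. r - int (rfilt R v i)) \<le> (int q - k) * (r - 1) + e - 1 - k)"
proof -
  have "0 < cond_exp R v" using i0 unfolding n_def by linarith
  with sub qf dv ic fin rr interpret singular_branch R v
    by unfold_locales (simp_all add: discrete_val_def)
  have n: "n = int ncond" unfolding n_def delta_eq using ncond_le_cond_exp by simp
  have i0': "1 \<le> i0" "i0 \<le> ncond" using i0 n by simp_all
  have AB: "B = {i0..ncond}" "A = {1..ncond} - {i0..ncond}"
    unfolding A_def B_def n_def[symmetric] n by simp_all
  have xR: "x \<in> R" using xm nonunits_subset by blast
  define SA where "SA = (\<Sum>i\<in>A. r - int (rfilt R v i))"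
  define SB where "SB = (\<Sum>i\<in>B. int (rfilt R v i))"
  have b: "b = int ncond * r - \<delta>" unfolding b_def \<delta>_def r_def n_def[symmetric] n ..
  note dec = excess_decomposition[OF i0' i0def[unfolded c_def e_def] xR xv[unfolded e_def]]
  have facts: "b = SA + k * r - SB" "k \<le> SB" "SB \<le> e - 1" "e \<le> r + k"
    using dec unfolding b SA_def SB_def AB k_def r_def e_def \<delta>_def by simp_all
  have "A \<subseteq> {1..ncond}" unfolding AB by blast
  then have SA: "0 \<le> SA" "SA = 0 \<Longrightarrow> \<forall>i\<in>A. int (rfilt R v i) = r"
    unfolding SA_def r_def by (rule sum_r_minus_rfilt_nonneg, rule sum_r_minus_rfilt_eq_0)
  have r2: "2 \<le> r" using two_le_r_of_excess_pos bpos unfolding b r_def \<delta>_def by simp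
  have bn: "b \<le> (n - 1) * (r - 1)" using excess_le unfolding b n r_def \<delta>_def .
  note hyps = facts(1) SA(1) facts(3,4) r2 bq
  show ?thesis
    using r_lower_bound[OF hyps] r_lower_bound_eq[OF hyps] k_bounds[OF hyps]
      sum_A_bounds[OF facts(1) SA(1) facts(2-4) r2 bn bq] SA(2)
    unfolding SA_def[symmetric] SB_def[symmetric] by blast
qed

end
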